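(* Let $\alpha,\beta$ be real numbers with $0<\alpha<2$ and $0<\beta<2$. There exist constants $c,C>0$ and $N$, independent of $n$, such that for every natural number $n>N$ there is a set $P\subset[0,1]^2$ of $n$ points with $$c\,n^2\le |\Pi_{\alpha,\beta}(P)|\le C\,n^2 .$$
   Context: For a finite set $P\subset\mathbb R^2$ and real numbers $\alpha,\beta$, define the set of ordered triples $$\Pi_{\alpha,\beta}(P)=\{(p,q,r)\in P\times P\times P:\ p\cdot q=\alpha \text{ and } p\cdot r=\beta\},$$ where $\cdot$ is the standard dot product on $\mathbb R^2$ (the points $p,q,r$ need not be distinct). *)

theory Defs
  imports "HOL-Analysis.Analysis"
begin

definition Pi_ab :: "real \<Rightarrow> real \<Rightarrow> (real^2) set \<Rightarrow> ((real^2) \<times> (real^2) \<times> (real^2)) set" where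
  "Pi_ab \<alpha> \<beta> P = {(p, q, r). p \<in> P \<and> q \<in> P \<and> r \<in> P \<and> p \<bullet> q = \<alpha> \<and> p \<bullet> r = \<beta>}"

definition unit_square :: "(real^2) set" where
  "unit_square = {x. \<forall>i. 0 \<le> x $ i \<and> x $ i \<le> 1}"

end

theory Submission
  imports Defs
begin

text \<open>Put one point at (1,1) and split the remaining n - 1 points evenly between the lines
x + y = \<alpha> and x + y = \<beta>, keeping them off the diagonal. Since (1,1)\<bullet>q = q_1 + q_2, the point
(1,1) forms a triple with every pair from the two lines, giving about n^2/4 triples. For any other
first point p we have p_1 \<noteq> p_2, and then the line p\<bullet>q = \<gamma> meets each antidiagonal line at most once,
so p has at most 3 partners q and at most 3 partners r, which contributes only 9n triples.\<close>

lemma inner_vec2: "(x::real^2) \<bullet> y = x$1 * y$1 + x$2 * y$2"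
  by (simp add: inner_vec_def sum_2)

lemma card_inner_eq_on_antidiagonal_le_1:
  fixes p :: "real^2" and Q :: "(real^2) set"
  assumes "finite Q" "p$1 \<noteq> p$2" "\<And>q. q \<in> Q \<Longrightarrow> q$1 + q$2 = g"
  shows "card {q\<in>Q. p \<bullet> q = \<gamma>} \<le> 1"
proof -
  have "q = q'" if "q \<in> Q" "q' \<in> Q" "p \<bullet> q = \<gamma>" "p \<bullet> q' = \<gamma>" for q q'
  proof -
    have "(p$1 - p$2) * (q$1 - q'$1) = p \<bullet> q - p \<bullet> q' - p$2 * ((q$1 + q$2) - (q'$1 + q'$2))"
      by (simp add: inner_vec2 algebra_simps)
    also have "\<dots> = 0" using that assms(3) by simp
    finally have "q$1 = q'$1" using assms(2) by simp
    moreover have "q$2 = q'$2"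
      using calculation assms(3)[OF that(1)] assms(3)[OF that(2)] by simp
    ultimately show "q = q'" by (simp add: vec_eq_iff forall_2)
  qed
  then show ?thesis using assms(1) by (auto simp: card_le_Suc0_iff_eq)
qed

lemma card_inner_eq_le_3:
  fixes p p0 :: "real^2" and P :: "(real^2) set"
  assumes "finite P" "p$1 \<noteq> p$2"
    and on_lines: "\<And>q. q \<in> P - {p0} \<Longrightarrow> q$1 + q$2 = g1 \<or> q$1 + q$2 = g2"
  shows "card {q\<in>P. p \<bullet> q = \<gamma>} \<le> 3"
proof -
  define L where "L g = {q\<in>P - {p0}. q$1 + q$2 = g \<and> p \<bullet> q = \<gamma>}" for g
  have finite_L: "finite (L g)" for g using assms(1) by (simp add: L_def)
  have L_le_1: "card (L g) \<le> 1" for g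
  proof -
    have "L g = {q\<in>{q\<in>P - {p0}. q$1 + q$2 = g}. p \<bullet> q = \<gamma>}" by (auto simp: L_def)
    then show ?thesis
      using assms(1,2) by (simp only:) (rule card_inner_eq_on_antidiagonal_le_1; simp)
  qed
  have "{q\<in>P. p \<bullet> q = \<gamma>} \<subseteq> insert p0 (L g1 \<union> L g2)"
    using on_lines by (auto simp: L_def)
  then have "card {q\<in>P. p \<bullet> q = \<gamma>} \<le> card (insert p0 (L g1 \<union> L g2))"
    using finite_L by (intro card_mono) auto
  also have "\<dots> \<le> Suc (card (L g1 \<union> L g2))"
    using finite_L by (simp add: card_insert_if)
  also have "\<dots> \<le> Suc (card (L g1) + card (L g2))"
    using card_Un_le by simp
  also have "\<dots> \<le> 3" using L_le_1[of g1] L_le_1[of g2] by simp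
  finally show ?thesis .
qed

lemma card_Pi_ab_le:
  fixes P :: "(real^2) set"
  assumes "finite P"
    and "\<And>p. p \<in> P - {p0} \<Longrightarrow> card {q\<in>P. p \<bullet> q = \<alpha>} \<le> k \<and> card {q\<in>P. p \<bullet> q = \<beta>} \<le> k"
  shows "card (Pi_ab \<alpha> \<beta> P) \<le> card P * card P + k * k * card P"
proof -
  define S where "S \<gamma> p = {q\<in>P. p \<bullet> q = \<gamma>}" for \<gamma> p
  have finite_S: "finite (S \<gamma> p)" for \<gamma> p using assms(1) by (simp add: S_def)
  define T where "T = (SIGMA p:P - {p0}. S \<alpha> p \<times> S \<beta> p)"
  have "finite T" using assms(1) finite_S by (simp add: T_def)
  have "Pi_ab \<alpha> \<beta> P \<subseteq> ({p0} \<times> P \<times> P) \<union> T"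
    by (auto simp: Pi_ab_def S_def T_def)
  then have "card (Pi_ab \<alpha> \<beta> P) \<le> card (({p0} \<times> P \<times> P) \<union> T)"
    using assms(1) \<open>finite T\<close> by (intro card_mono) auto
  also have "\<dots> \<le> card ({p0} \<times> P \<times> P) + card T"
    by (rule card_Un_le)
  also have "card T = (\<Sum>p\<in>P - {p0}. card (S \<alpha> p) * card (S \<beta> p))"
    using assms(1) finite_S by (simp add: T_def card_cartesian_product)
  also have "\<dots> \<le> (\<Sum>p\<in>P - {p0}. k * k)"
    using assms(2) by (intro sum_mono mult_le_mono) (auto simp: S_def)
  also have "\<dots> \<le> k * k * card P"
    using card_Diff1_le[of P p0] by simp
  finally show ?thesis by (simp add: card_cartesian_product)
qed

lemma card_Pi_ab_ge:
  fixes P A B :: "(real^2) set"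
  assumes "finite P" "vector [1, 1] \<in> P" "A \<subseteq> P" "B \<subseteq> P"
    and "\<And>q. q \<in> A \<Longrightarrow> q$1 + q$2 = \<alpha>" "\<And>q. q \<in> B \<Longrightarrow> q$1 + q$2 = \<beta>"
  shows "card A * card B \<le> card (Pi_ab \<alpha> \<beta> P)"
proof -
  have "finite (Pi_ab \<alpha> \<beta> P)"
    by (rule finite_subset[of _ "P \<times> P \<times> P"]) (auto simp: Pi_ab_def assms(1))
  moreover have "{vector [1, 1] :: real^2} \<times> A \<times> B \<subseteq> Pi_ab \<alpha> \<beta> P"
    using assms(2-6) by (auto simp: Pi_ab_def inner_vec2)
  ultimately have "card ({vector [1, 1] :: real^2} \<times> A \<times> B) \<le> card (Pi_ab \<alpha> \<beta> P)"
    by (rule card_mono)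
  then show ?thesis by (simp add: card_cartesian_product)
qed

definition antidiagonal_points :: "real \<Rightarrow> real \<Rightarrow> nat \<Rightarrow> (real^2) set" where
  "antidiagonal_points g s k =
     (\<lambda>i. vector [g/2 + s * real (Suc i), g/2 - s * real (Suc i)]) ` {..<k}"

lemma finite_antidiagonal_points: "finite (antidiagonal_points g s k)"
  by (simp add: antidiagonal_points_def)

lemma antidiagonal_pointsD:
  assumes "q \<in> antidiagonal_points g s k" "s \<noteq> 0"
  shows "q$1 + q$2 = g" "0 < s * (q$1 - q$2)"
proof -
  obtain i where q: "q = vector [g/2 + s * real (Suc i), g/2 - s * real (Suc i)]"
    using assms(1) by (auto simp: antidiagonal_points_def)
  then show "q$1 + q$2 = g" by simp
  have "s * (q$1 - q$2) = 2 * s\<^sup>2 * real (Suc i)" by (simp add: q power2_eq_square)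
  then show "0 < s * (q$1 - q$2)" using assms(2) by simp
qed

lemma card_antidiagonal_points:
  assumes "s \<noteq> 0"
  shows "card (antidiagonal_points g s k) = k"
  unfolding antidiagonal_points_def
  using assms by (subst card_image) (auto intro!: inj_onI simp: vec_eq_iff forall_2)

lemma antidiagonal_points_subset_unit_square:
  assumes "real k * \<bar>s\<bar> \<le> g/2" "real k * \<bar>s\<bar> \<le> 1 - g/2"
  shows "antidiagonal_points g s k \<subseteq> unit_square"
proof
  fix q assume "q \<in> antidiagonal_points g s k"
  then obtain i where "i < k" and q: "q = vector [g/2 + s * real (Suc i), g/2 - s * real (Suc i)]"
    by (auto simp: antidiagonal_points_def)
  have "\<bar>s\<bar> * real (Suc i) \<le> \<bar>s\<bar> * real k"
    using \<open>i < k\<close> by (intro mult_left_mono) auto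
  then have "\<bar>s * real (Suc i)\<bar> \<le> real k * \<bar>s\<bar>"
    by (simp add: abs_mult mult.commute)
  then show "q \<in> unit_square"
    using assms by (auto simp: q unit_square_def forall_2)
qed

lemma balanced_split_product_ge:
  assumes "4 \<le> n"
  shows "real n ^ 2 / 16 \<le> real ((n - 1) div 2) * real (n - 1 - (n - 1) div 2)"
proof -
  have k1: "real n - 2 \<le> 2 * real ((n - 1) div 2)"
    and k2: "real n - 1 \<le> 2 * real (n - 1 - (n - 1) div 2)"
    using assms by linarith+
  have "real n ^ 2 / 4 \<le> (real n - 2) * (real n - 1)"
  proof -
    have "0 \<le> (real n - 4) * (3 * real n) + 8" using assms by simp
    then show ?thesis by (simp add: power2_eq_square algebra_simps)
  qed
  also have "\<dots> \<le> 2 * real ((n - 1) div 2) * (2 * real (n - 1 - (n - 1) div 2))"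
    using k1 k2 assms by (intro mult_mono) auto
  finally show ?thesis by simp
qed

lemma point_set_with_quadratic_Pi_ab:
  fixes \<alpha> \<beta> :: real and n :: nat
  assumes "0 < \<alpha>" "\<alpha> < 2" "0 < \<beta>" "\<beta> < 2" "4 \<le> n"
  shows "\<exists>P. P \<subseteq> unit_square \<and> finite P \<and> card P = n \<and>
               1/16 * real n ^ 2 \<le> real (card (Pi_ab \<alpha> \<beta> P)) \<and>
               real (card (Pi_ab \<alpha> \<beta> P)) \<le> 10 * real n ^ 2"
proof -
  define \<delta> where "\<delta> = min (min (\<alpha>/2) (1 - \<alpha>/2)) (min (\<beta>/2) (1 - \<beta>/2))"
  define s where "s = \<delta> / real n"
  define k1 where "k1 = (n - 1) div 2"
  define k2 where "k2 = n - 1 - k1"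
  define A where "A = antidiagonal_points \<alpha> s k1"
  define B where "B = antidiagonal_points \<beta> (- s) k2"
  define p0 :: "real^2" where "p0 = vector [1, 1]"
  define P where "P = insert p0 (A \<union> B)"
  have "\<delta> > 0" using assms by (simp add: \<delta>_def)
  then have "s > 0" using assms(5) by (simp add: s_def)
  have "\<delta> \<le> \<alpha>/2" "\<delta> \<le> 1 - \<alpha>/2" "\<delta> \<le> \<beta>/2" "\<delta> \<le> 1 - \<beta>/2"
    by (simp_all add: \<delta>_def min_def)
  have "k1 < n" "k2 < n" using assms(5) by (auto simp: k1_def k2_def)
  then have "real k1 * \<bar>s\<bar> \<le> \<delta>" "real k2 * \<bar>- s\<bar> \<le> \<delta>"
    using \<open>\<delta> > 0\<close> \<open>s > 0\<close> by (auto simp: s_def field_simps)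
  then have "A \<subseteq> unit_square" "B \<subseteq> unit_square"
    unfolding A_def B_def using \<open>\<delta> \<le> \<alpha>/2\<close> \<open>\<delta> \<le> 1 - \<alpha>/2\<close> \<open>\<delta> \<le> \<beta>/2\<close> \<open>\<delta> \<le> 1 - \<beta>/2\<close>
    by (intro antidiagonal_points_subset_unit_square; linarith)+
  have A: "q$1 + q$2 = \<alpha> \<and> q$2 < q$1" if "q \<in> A" for q
    using antidiagonal_pointsD[of q \<alpha> s k1] that \<open>s > 0\<close> by (simp add: A_def zero_less_mult_iff)
  have B: "q$1 + q$2 = \<beta> \<and> q$1 < q$2" if "q \<in> B" for q
    using antidiagonal_pointsD[of q \<beta> "- s" k2] that \<open>s > 0\<close> by (simp add: B_def mult_less_0_iff)
  have "finite A" "finite B" by (simp_all add: A_def B_def finite_antidiagonal_points)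
  have "card A = k1" "card B = k2"
    using \<open>s > 0\<close> by (simp_all add: A_def B_def card_antidiagonal_points)
  moreover have "A \<inter> B = {}" using A B by force
  moreover have "p0 \<notin> A \<union> B" using A B by (force simp: p0_def)
  ultimately have card_P: "card P = n"
    using \<open>finite A\<close> \<open>finite B\<close> \<open>k1 < n\<close> by (simp add: P_def card_Un_disjoint k2_def)
  have "finite P" using \<open>finite A\<close> \<open>finite B\<close> by (simp add: P_def)
  have "P \<subseteq> unit_square"
    using \<open>A \<subseteq> unit_square\<close> \<open>B \<subseteq> unit_square\<close> by (simp add: P_def p0_def unit_square_def forall_2)
  have "real n ^ 2 / 16 \<le> real k1 * real k2"
    using balanced_split_product_ge[OF assms(5)] by (simp add: k1_def k2_def)
  also have "\<dots> \<le> real (card (Pi_ab \<alpha> \<beta> P))"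
    using card_Pi_ab_ge[OF \<open>finite P\<close>, of A B \<alpha> \<beta>] A B \<open>card A = k1\<close> \<open>card B = k2\<close>
    by (auto simp: P_def p0_def simp flip: of_nat_mult)
  finally have lower: "1/16 * real n ^ 2 \<le> real (card (Pi_ab \<alpha> \<beta> P))" by simp
  have "card {q\<in>P. p \<bullet> q = \<gamma>} \<le> 3" if "p \<in> P - {p0}" for p \<gamma>
  proof (rule card_inner_eq_le_3[OF \<open>finite P\<close>])
    show "p$1 \<noteq> p$2" using that A B by (force simp: P_def)
    show "\<And>q. q \<in> P - {p0} \<Longrightarrow> q$1 + q$2 = \<alpha> \<or> q$1 + q$2 = \<beta>"
      using A B by (auto simp: P_def)
  qed
  then have "card (Pi_ab \<alpha> \<beta> P) \<le> n * n + 3 * 3 * n"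
    using card_Pi_ab_le[OF \<open>finite P\<close>, of p0 \<alpha> 3 \<beta>] card_P by blast
  also have "\<dots> \<le> 10 * (n * n)" using le_square[of n] by simp
  finally have "real (card (Pi_ab \<alpha> \<beta> P)) \<le> real (10 * (n * n))"
    by (simp only: of_nat_le_iff)
  then have upper: "real (card (Pi_ab \<alpha> \<beta> P)) \<le> 10 * real n ^ 2"
    by (simp add: power2_eq_square)
  show ?thesis
    using \<open>P \<subseteq> unit_square\<close> \<open>finite P\<close> card_P lower upper by blast
qed

theorem proposition1:
  fixes \<alpha> \<beta> :: real
  assumes "0 < \<alpha>" "\<alpha> < 2" "0 < \<beta>" "\<beta> < 2"
  shows "\<exists>c C :: real. \<exists>N :: nat. c > 0 \<and> C > 0 \<and>
           (\<forall>n > N. \<exists>P. P \<subseteq> unit_square \<and> finite P \<and> card P = n \<and>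
               c * real n ^ 2 \<le> real (card (Pi_ab \<alpha> \<beta> P)) \<and>
               real (card (Pi_ab \<alpha> \<beta> P)) \<le> C * real n ^ 2)"
proof (rule exI[of _ "1/16"], rule exI[of _ 10], rule exI[of _ 3], intro conjI allI impI)
  fix n :: nat
  assume "3 < n"
  then show "\<exists>P. P \<subseteq> unit_square \<and> finite P \<and> card P = n \<and>
      1/16 * real n ^ 2 \<le> real (card (Pi_ab \<alpha> \<beta> P)) \<and>
      real (card (Pi_ab \<alpha> \<beta> P)) \<le> 10 * real n ^ 2"
    by (intro point_set_with_quadratic_Pi_ab assms) simp
qed simp_all

end
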